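(* There exists a $\mathcal{C}^\infty$ injective map $\Phi$ from the closed unit ball $\overline{\mathbb{B}}\subset\mathbb{C}^5$ into $\mathbb{C}^8$ whose restriction to the open ball $\mathbb{B}$ is a holomorphic embedding, such that $\Phi(\overline{\mathbb{B}})$ has no basis of open Stein neighborhoods in $\mathbb{C}^8$. *)

theory Defs
  imports "HOL-Analysis.Analysis" "HOL-Library.Numeral_Type"
begin

text \<open>Real C^infinity on an open set: all iterated (Frechet) directional derivatives
  exist and are continuous.\<close>
fun Cdirs :: "'a::real_normed_vector set \<Rightarrow> ('a \<Rightarrow> 'b::real_normed_vector) \<Rightarrow> 'a list \<Rightarrow> bool" where
  "Cdirs S f [] = continuous_on S f"
| "Cdirs S f (v # vs) =
     ((\<forall>x\<in>S. f differentiable (at x)) \<and> Cdirs S (\<lambda>x. frechet_derivative f (at x) v) vs)"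

definition smooth_on :: "'a::real_normed_vector set \<Rightarrow> ('a \<Rightarrow> 'b::real_normed_vector) \<Rightarrow> bool" where
  "smooth_on S f \<longleftrightarrow> open S \<and> (\<forall>vs. Cdirs S f vs)"

definition smooth_on_set :: "'a::real_normed_vector set \<Rightarrow> ('a \<Rightarrow> 'b::real_normed_vector) \<Rightarrow> bool" where
  "smooth_on_set A f \<longleftrightarrow> (\<exists>U g. open U \<and> A \<subseteq> U \<and> smooth_on U g \<and> (\<forall>x\<in>A. g x = f x))"

definition holo_map_on :: "(complex^'n) set \<Rightarrow> (complex^'n \<Rightarrow> complex^'m) \<Rightarrow> bool" where
  "holo_map_on S f \<longleftrightarrow> open S \<and>
     (\<forall>x\<in>S. \<exists>L. (f has_derivative L) (at x) \<and> (\<forall>c v. L (c *s v) = c *s L v))"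

definition holo_fun_on :: "(complex^'n) set \<Rightarrow> (complex^'n \<Rightarrow> complex) \<Rightarrow> bool" where
  "holo_fun_on S f \<longleftrightarrow> open S \<and>
     (\<forall>x\<in>S. \<exists>L. (f has_derivative L) (at x) \<and> (\<forall>c v. L (c *s v) = c * L v))"

definition holo_embedding :: "(complex^'n) set \<Rightarrow> (complex^'n \<Rightarrow> complex^'m) \<Rightarrow> bool" where
  "holo_embedding S f \<longleftrightarrow> holo_map_on S f \<and> inj_on f S \<and>
     (\<forall>x\<in>S. inj (frechet_derivative f (at x))) \<and>
     (\<exists>g. homeomorphism S (f ` S) f g)"

definition holo_hull :: "(complex^'n) set \<Rightarrow> (complex^'n) set \<Rightarrow> (complex^'n) set" where
  "holo_hull \<Omega> K = {z \<in> \<Omega>. \<forall>f. holo_fun_on \<Omega> f \<longrightarrow>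
       (\<forall>B. (\<forall>w\<in>K. norm (f w) \<le> B) \<longrightarrow> norm (f z) \<le> B)}"

definition stein_open :: "(complex^'n) set \<Rightarrow> bool" where
  "stein_open \<Omega> \<longleftrightarrow> open \<Omega> \<and>
     (\<forall>x\<in>\<Omega>. \<forall>y\<in>\<Omega>. x \<noteq> y \<longrightarrow> (\<exists>f. holo_fun_on \<Omega> f \<and> f x \<noteq> f y)) \<and>
     (\<forall>K. compact K \<and> K \<subseteq> \<Omega> \<longrightarrow> compact (holo_hull \<Omega> K))"

definition has_stein_nbhd_basis :: "(complex^'n) set \<Rightarrow> bool" where
  "has_stein_nbhd_basis A \<longleftrightarrow>
     (\<forall>U. open U \<and> A \<subseteq> U \<longrightarrow> (\<exists>V. stein_open V \<and> A \<subseteq> V \<and> V \<subseteq> U))"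

end

(*
  For 0 <= r <= 1/2 the
  circle zeta |-> (r zeta, -r cnj zeta, 1 - 2 r^2, 0, 0) lies in the closed unit ball, and on it
  z1 z2 = -r^2 and the factor 1 - z3 + 2 z1 z2 vanishes. Hence Phi maps it onto the boundary of
  the analytic disc zeta |-> (r zeta, 1 - 2 r^2, 0, 0, -r^2, 0, 0, 0). For r = 0 this disc is a
  point of the image, while for r = 1/2 its centre is not in the image (z1 = 0 but z1 z2 = -1/4).
  A Stein neighbourhood of the image avoiding that centre is impossible by the continuity
  principle: by the maximum principle a disc inside the neighbourhood lies in the compact
  holomorphically convex hull of the image, so the set of parameters whose disc lies in the
  neighbourhood is closed as well as open in [0, 1/2].
*)

theory Submission
  imports Defs "HOL-Complex_Analysis.Conformal_Mappings"
begin

section \<open>Smooth maps\<close>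

lemma Cdirs_cong:
  assumes "open S" and "\<And>x. x \<in> S \<Longrightarrow> f x = g x" and "Cdirs S f vs"
  shows "Cdirs S g vs"
  using assms(2,3)
proof (induction vs arbitrary: f g)
  case Nil
  then show ?case using continuous_on_eq by auto
next
  case (Cons v vs)
  have df: "f differentiable (at x)" if "x \<in> S" for x
    using Cons.prems(2) that by simp
  have "g differentiable (at x)" if x: "x \<in> S" for x
  proof -
    obtain D where "(f has_derivative D) (at x)"
      using df[OF x] by (auto simp: differentiable_def)
    then have "(g has_derivative D) (at x)"
      by (rule has_derivative_transform_within_open[OF _ assms(1) x]) (simp add: Cons.prems(1))
    then show ?thesis by (auto simp: differentiable_def)
  qed
  moreover have "frechet_derivative f (at x) v = frechet_derivative g (at x) v" if "x \<in> S" for x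
    by (rule fun_cong[OF frechet_derivative_transform_within_open[OF df[OF that] assms(1) that]])
      (simp add: Cons.prems(1))
  moreover have "Cdirs S (\<lambda>x. frechet_derivative f (at x) v) vs"
    using Cons.prems(2) by simp
  ultimately show ?case
    using Cons.IH[of "\<lambda>x. frechet_derivative f (at x) v"] by simp
qed

lemma Cdirs_Cons_intro:
  assumes "open S" and "\<And>x. x \<in> S \<Longrightarrow> (f has_derivative f' x) (at x)"
    and "Cdirs S (\<lambda>x. f' x v) vs"
  shows "Cdirs S f (v # vs)"
proof -
  have "Cdirs S (\<lambda>x. frechet_derivative f (at x) v) vs"
    by (rule Cdirs_cong[OF assms(1) _ assms(3)]) (simp add: frechet_derivative_at[OF assms(2)])
  moreover have "\<forall>x\<in>S. f differentiable (at x)"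
    using assms(2) differentiableI by blast
  ultimately show ?thesis by simp
qed

lemma Cdirs_add:
  assumes "open S"
  shows "Cdirs S f vs \<Longrightarrow> Cdirs S g vs \<Longrightarrow> Cdirs S (\<lambda>x. f x + g x) vs"
proof (induction vs arbitrary: f g)
  case Nil
  then show ?case by (simp add: continuous_on_add)
next
  case (Cons v vs)
  show ?case
  proof (rule Cdirs_Cons_intro[OF assms])
    show "((\<lambda>x. f x + g x) has_derivative
        (\<lambda>h. frechet_derivative f (at x) h + frechet_derivative g (at x) h)) (at x)" if "x \<in> S" for x
      using Cons.prems that by (intro has_derivative_add) (simp_all add: frechet_derivative_works)
    show "Cdirs S (\<lambda>x. frechet_derivative f (at x) v + frechet_derivative g (at x) v) vs"
      using Cons.prems by (intro Cons.IH) simp_all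
  qed
qed

lemma smooth_onD:
  assumes "smooth_on S f"
  shows "open S" and "continuous_on S f" and "\<And>x. x \<in> S \<Longrightarrow> f differentiable (at x)"
    and "\<And>v. smooth_on S (\<lambda>x. frechet_derivative f (at x) v)"
proof -
  show "open S" using assms by (simp add: smooth_on_def)
  have all: "Cdirs S f vs" for vs using assms by (simp add: smooth_on_def)
  show "continuous_on S f" using all[of "[]"] by simp
  show "f differentiable (at x)" if "x \<in> S" for x using all[of "[0]"] that by simp
  show "smooth_on S (\<lambda>x. frechet_derivative f (at x) v)" for v
    using all[of "v # _"] \<open>open S\<close> by (simp add: smooth_on_def)
qed

lemma smooth_on_has_derivative:
  "smooth_on S f \<Longrightarrow> x \<in> S \<Longrightarrow> (f has_derivative frechet_derivative f (at x)) (at x)"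
  using smooth_onD(3) frechet_derivative_works by blast

lemma smooth_on_add: "smooth_on S f \<Longrightarrow> smooth_on S g \<Longrightarrow> smooth_on S (\<lambda>x. f x + g x)"
  by (simp add: smooth_on_def Cdirs_add)

lemma smooth_on_const:
  assumes "open S"
  shows "smooth_on S (\<lambda>x. c)"
proof -
  have "Cdirs S (\<lambda>x. c) vs" for vs
  proof (induction vs arbitrary: c)
    case (Cons v vs)
    show ?case
      by (rule Cdirs_Cons_intro[OF assms has_derivative_const]) (rule Cons.IH)
  qed simp
  then show ?thesis using assms by (simp add: smooth_on_def)
qed

lemma smooth_on_id:
  assumes "open S"
  shows "smooth_on S (\<lambda>x. x)"
  unfolding smooth_on_def
proof (intro conjI allI assms)
  show "Cdirs S (\<lambda>x. x) vs" for vs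
  proof (cases vs)
    case (Cons v ws)
    show ?thesis unfolding Cons
      by (rule Cdirs_Cons_intro[OF assms has_derivative_ident])
        (use smooth_on_const[OF assms, unfolded smooth_on_def] in blast)
  qed (simp add: continuous_on_id)
qed

lemma smooth_on_compose_linear:
  assumes l: "bounded_linear l"
  shows "smooth_on S f \<Longrightarrow> smooth_on S (\<lambda>x. l (f x))"
proof -
  have "Cdirs S (\<lambda>x. l (f x)) vs" if "smooth_on S f" for vs
    using that
  proof (induction vs arbitrary: f)
    case Nil
    then show ?case
      using bounded_linear.continuous_on[OF l smooth_onD(2)[OF Nil]] by simp
  next
    case (Cons v vs)
    show ?case
    proof (rule Cdirs_Cons_intro[OF smooth_onD(1)[OF Cons.prems]])
      show "((\<lambda>x. l (f x)) has_derivative (\<lambda>h. l (frechet_derivative f (at x) h))) (at x)"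
        if "x \<in> S" for x
        using Cons.prems that by (intro bounded_linear.has_derivative[OF l] smooth_on_has_derivative)
      show "Cdirs S (\<lambda>x. l (frechet_derivative f (at x) v)) vs"
        using Cons.prems by (intro Cons.IH smooth_onD(4))
    qed
  qed
  then show "smooth_on S f \<Longrightarrow> smooth_on S (\<lambda>x. l (f x))"
    using smooth_onD(1) by (simp add: smooth_on_def)
qed

lemma smooth_on_linear: "open S \<Longrightarrow> bounded_linear l \<Longrightarrow> smooth_on S l"
  using smooth_on_compose_linear[OF _ smooth_on_id] by blast

lemma smooth_on_diff: "smooth_on S f \<Longrightarrow> smooth_on S g \<Longrightarrow> smooth_on S (\<lambda>x. f x - g x)"
  using smooth_on_add[OF _ smooth_on_compose_linear[OF bounded_linear_minus[OF bounded_linear_ident]]]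
  by fastforce

lemma smooth_on_bilinear:
  assumes b: "bounded_bilinear b"
  shows "smooth_on S f \<Longrightarrow> smooth_on S g \<Longrightarrow> smooth_on S (\<lambda>x. b (f x) (g x))"
proof -
  have "Cdirs S (\<lambda>x. b (f x) (g x)) vs" if "smooth_on S f" "smooth_on S g" for vs
    using that
  proof (induction vs arbitrary: f g)
    case Nil
    then show ?case
      using bounded_bilinear.continuous_on[OF b smooth_onD(2) smooth_onD(2)] by simp
  next
    case (Cons v vs)
    note S = smooth_onD(1)[OF Cons.prems(1)]
    show ?case
    proof (rule Cdirs_Cons_intro[OF S])
      show "((\<lambda>x. b (f x) (g x)) has_derivative (\<lambda>h. b (f x) (frechet_derivative g (at x) h)
          + b (frechet_derivative f (at x) h) (g x))) (at x)" if "x \<in> S" for x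
        using Cons.prems that by (intro bounded_bilinear.FDERIV[OF b] smooth_on_has_derivative)
      show "Cdirs S (\<lambda>x. b (f x) (frechet_derivative g (at x) v)
          + b (frechet_derivative f (at x) v) (g x)) vs"
        using Cons.prems by (intro Cdirs_add[OF S] Cons.IH smooth_onD(4))
    qed
  qed
  then show "smooth_on S f \<Longrightarrow> smooth_on S g \<Longrightarrow> smooth_on S (\<lambda>x. b (f x) (g x))"
    using smooth_onD(1) by (simp add: smooth_on_def)
qed

section \<open>Analytic discs and the continuity principle\<close>

lemma continuous_on_family_slice:
  assumes "continuous_on (S \<times> C) (\<lambda>(t, z). D t z)"
  shows "z \<in> C \<Longrightarrow> continuous_on S (\<lambda>t. D t z)"
    and "t \<in> S \<Longrightarrow> continuous_on C (D t)"
proof -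
  show "continuous_on S (\<lambda>t. D t z)" if "z \<in> C"
  proof -
    have "continuous_on S (\<lambda>t. (\<lambda>(t, z). D t z) (t, z))"
      by (rule continuous_on_compose2[OF assms]) (use that in \<open>auto intro!: continuous_intros\<close>)
    then show ?thesis by simp
  qed
  show "continuous_on C (D t)" if "t \<in> S"
  proof -
    have "continuous_on C (\<lambda>z. (\<lambda>(t, z). D t z) (t, z))"
      by (rule continuous_on_compose2[OF assms]) (use that in \<open>auto intro!: continuous_intros\<close>)
    then show ?thesis by simp
  qed
qed

lemma closedin_family_image_subset:
  assumes cont: "continuous_on (S \<times> C) (\<lambda>(t, z). D t z)" and "closed H"
  shows "closedin (top_of_set S) {t \<in> S. D t ` C \<subseteq> H}"
proof (cases "C = {}")
  case False
  have "{t \<in> S. D t ` C \<subseteq> H} = (\<Inter>z\<in>C. S \<inter> (\<lambda>t. D t z) -` H)"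
    using False by auto
  also have "closedin (top_of_set S) \<dots>"
    using False continuous_closedin_preimage[OF continuous_on_family_slice(1)[OF cont] \<open>closed H\<close>]
    by blast
  finally show ?thesis .
qed simp

lemma openin_family_image_subset:
  fixes D :: "'a::metric_space \<Rightarrow> 'b::metric_space \<Rightarrow> 'c::metric_space"
  assumes "compact S" "compact C" and cont: "continuous_on (S \<times> C) (\<lambda>(t, z). D t z)"
    and "open V"
  shows "openin (top_of_set S) {t \<in> S. D t ` C \<subseteq> V}"
  unfolding openin_euclidean_subtopology_iff
proof (intro conjI ballI)
  fix r assume r: "r \<in> {t \<in> S. D t ` C \<subseteq> V}"
  have "compact (D r ` C)"
    using r \<open>compact C\<close> by (intro compact_continuous_image continuous_on_family_slice(2)[OF cont]) auto
  then obtain \<epsilon> where "\<epsilon> > 0" and \<epsilon>: "(\<Union>w\<in>D r ` C. ball w \<epsilon>) \<subseteq> V"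
    using compact_subset_open_imp_ball_epsilon_subset \<open>open V\<close> r by blast
  have "uniformly_continuous_on (S \<times> C) (\<lambda>(t, z). D t z)"
    using assms by (intro compact_uniformly_continuous compact_Times)
  then obtain \<delta> where "\<delta> > 0" and \<delta>: "\<And>p q. p \<in> S \<times> C \<Longrightarrow> q \<in> S \<times> C \<Longrightarrow> dist q p < \<delta> \<Longrightarrow>
      dist ((\<lambda>(t, z). D t z) q) ((\<lambda>(t, z). D t z) p) < \<epsilon>"
    unfolding uniformly_continuous_on_def using \<open>\<epsilon> > 0\<close> by metis
  have "s \<in> {t \<in> S. D t ` C \<subseteq> V}" if "s \<in> S" "dist s r < \<delta>" for s
  proof -
    have "D s z \<in> ball (D r z) \<epsilon>" if "z \<in> C" for z
      using \<delta>[of "(r, z)" "(s, z)"] r \<open>s \<in> S\<close> \<open>dist s r < \<delta>\<close> that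
      by (simp add: dist_Pair_Pair dist_commute)
    then show ?thesis using \<epsilon> \<open>s \<in> S\<close> by blast
  qed
  then show "\<exists>e>0. \<forall>s\<in>S. dist s r < e \<longrightarrow> s \<in> {t \<in> S. D t ` C \<subseteq> V}"
    using \<open>\<delta> > 0\<close> by blast
qed auto

definition analytic_disc :: "(complex \<Rightarrow> complex^'n) \<Rightarrow> bool" where
  "analytic_disc D \<longleftrightarrow> continuous_on (cball 0 1) D \<and>
     (\<forall>z\<in>ball 0 1. \<exists>d. (D has_derivative (\<lambda>h. h *s d)) (at z))"

lemma holo_fun_on_continuous_on: "holo_fun_on \<Omega> f \<Longrightarrow> continuous_on \<Omega> f"
  unfolding holo_fun_on_def
  by (metis continuous_at_imp_continuous_on has_derivative_continuous)

lemma holo_fun_on_compose_field_differentiable: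
  assumes f: "holo_fun_on \<Omega> f" and "D z \<in> \<Omega>" and D: "(D has_derivative (\<lambda>h. h *s d)) (at z)"
  shows "(\<lambda>w. f (D w)) field_differentiable (at z)"
proof -
  obtain L where L: "(f has_derivative L) (at (D z))" and clin: "\<And>c v. L (c *s v) = c * L v"
    using f \<open>D z \<in> \<Omega>\<close> unfolding holo_fun_on_def by blast
  have "(\<lambda>h. L (h *s d)) = (*) (L d)"
    by (simp add: fun_eq_iff clin mult.commute)
  then have "((\<lambda>w. f (D w)) has_field_derivative L d) (at z)"
    using diff_chain_at[OF D L] by (simp add: o_def has_field_derivative_def)
  then show ?thesis unfolding field_differentiable_def by blast
qed

lemma analytic_disc_subset_holo_hull:
  assumes D: "analytic_disc D" and \<Omega>: "D ` cball 0 1 \<subseteq> \<Omega>" and K: "D ` sphere 0 1 \<subseteq> K"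
  shows "D ` cball 0 1 \<subseteq> holo_hull \<Omega> K"
proof (rule image_subsetI)
  fix z :: complex assume z: "z \<in> cball 0 1"
  have "norm (f (D z)) \<le> B" if f: "holo_fun_on \<Omega> f" and B: "\<forall>w\<in>K. norm (f w) \<le> B" for f B
  proof (rule maximum_modulus_frontier[of "\<lambda>w. f (D w)" "cball 0 1"])
    have "(\<lambda>w. f (D w)) field_differentiable (at w)" if w: "w \<in> ball 0 1" for w
    proof -
      obtain d where "(D has_derivative (\<lambda>h. h *s d)) (at w)"
        using D w unfolding analytic_disc_def by blast
      moreover have "D w \<in> \<Omega>" using w \<Omega> by auto
      ultimately show ?thesis
        using holo_fun_on_compose_field_differentiable[OF f] by blast
    qed
    then show "(\<lambda>w. f (D w)) holomorphic_on interior (cball 0 1)"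
      by (simp add: holomorphic_on_def field_differentiable_at_within)
    show "continuous_on (closure (cball 0 1)) (\<lambda>w. f (D w))"
      using D \<Omega> unfolding analytic_disc_def
      by (auto intro: continuous_on_compose2[OF holo_fun_on_continuous_on[OF f]])
    show "norm (f (D w)) \<le> B" if "w \<in> frontier (cball 0 1)" for w
    proof -
      have "D w \<in> K" using that K by auto
      then show ?thesis using B by blast
    qed
  qed (use z in auto)
  then show "D z \<in> holo_hull \<Omega> K"
    using z \<Omega> unfolding holo_hull_def by blast
qed

theorem continuity_principle:
  fixes D :: "real \<Rightarrow> complex \<Rightarrow> complex^'n"
  assumes V: "stein_open V" and K: "compact K" "K \<subseteq> V"
    and cont: "continuous_on ({a..b} \<times> cball 0 1) (\<lambda>(t, z). D t z)"
    and disc: "\<And>t. t \<in> {a..b} \<Longrightarrow> analytic_disc (D t)"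
    and bdry: "\<And>t. t \<in> {a..b} \<Longrightarrow> D t ` sphere 0 1 \<subseteq> K"
    and start: "D a ` cball 0 1 \<subseteq> V"
    and t: "t \<in> {a..b}"
  shows "D t ` cball 0 1 \<subseteq> V"
proof -
  define H where "H = holo_hull V K"
  have "compact H" "H \<subseteq> V"
    using V K unfolding stein_open_def H_def holo_hull_def by auto
  define T where "T = {t \<in> {a..b}. D t ` cball 0 1 \<subseteq> V}"
  have "T = {t \<in> {a..b}. D t ` cball 0 1 \<subseteq> H}"
    using analytic_disc_subset_holo_hull[OF disc _ bdry] \<open>H \<subseteq> V\<close>
    unfolding T_def H_def by blast
  then have "closedin (top_of_set {a..b}) T"
    using closedin_family_image_subset[OF cont compact_imp_closed[OF \<open>compact H\<close>]] by simp
  moreover have "openin (top_of_set {a..b}) T"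
    unfolding T_def using V
    by (intro openin_family_image_subset[OF compact_Icc compact_cball cont]) (simp add: stein_open_def)
  moreover have "a \<in> T"
    using start t unfolding T_def by auto
  ultimately have "T = {a..b}"
    using connected_clopen[of "{a..b}"] by auto
  then have "t \<in> T" using t by simp
  then show ?thesis unfolding T_def by simp
qed

lemma not_has_stein_nbhd_basis_by_discs:
  fixes D :: "real \<Rightarrow> complex \<Rightarrow> complex^'n"
  assumes "compact A"
    and cont: "continuous_on ({a..b} \<times> cball 0 1) (\<lambda>(t, z). D t z)"
    and disc: "\<And>t. t \<in> {a..b} \<Longrightarrow> analytic_disc (D t)"
    and bdry: "\<And>t. t \<in> {a..b} \<Longrightarrow> D t ` sphere 0 1 \<subseteq> A"
    and start: "D a ` cball 0 1 \<subseteq> A"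
    and escape: "t \<in> {a..b}" "z \<in> cball 0 1" "D t z \<notin> A"
  shows "\<not> has_stein_nbhd_basis A"
proof
  assume "has_stein_nbhd_basis A"
  moreover have "open (- {D t z})" "A \<subseteq> - {D t z}"
    using escape(3) by auto
  ultimately obtain V where V: "stein_open V" "A \<subseteq> V" "V \<subseteq> - {D t z}"
    unfolding has_stein_nbhd_basis_def by blast
  have "D t ` cball 0 1 \<subseteq> V"
    using continuity_principle[OF V(1) \<open>compact A\<close> V(2) cont disc bdry _ escape(1)] start V(2)
    by blast
  then show False using V(3) escape(2) by blast
qed

lemma exhaust_5:
  fixes x :: 5
  shows "x = 1 \<or> x = 2 \<or> x = 3 \<or> x = 4 \<or> x = 5"
proof (induct x)
  case (of_int z)
  then have "z = 0 \<or> z = 1 \<or> z = 2 \<or> z = 3 \<or> z = 4" by fastforce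
  then show ?case by auto
qed

lemma forall_5: "(\<forall>i::5. P i) \<longleftrightarrow> P 1 \<and> P 2 \<and> P 3 \<and> P 4 \<and> P 5"
  by (metis exhaust_5)

lemma UNIV_5: "UNIV = {1, 2, 3, 4, 5::5}"
  using exhaust_5 by auto

lemma power2_norm_vec: "(norm x)\<^sup>2 = (\<Sum>i\<in>UNIV. (norm (x $ i))\<^sup>2)"
  unfolding norm_vec_def L2_set_def by (simp add: sum_nonneg)

lemma power2_norm_nth_add_le:
  assumes "i \<noteq> j"
  shows "(norm (x $ i))\<^sup>2 + (norm (x $ j))\<^sup>2 \<le> (norm x)\<^sup>2"
proof -
  have "(\<Sum>k\<in>{i, j}. (norm (x $ k))\<^sup>2) \<le> (\<Sum>k\<in>UNIV. (norm (x $ k))\<^sup>2)"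
    by (rule sum_mono2) auto
  then show ?thesis using assms by (simp add: power2_norm_vec)
qed

lemma bounded_linear_axis: "bounded_linear (axis k :: 'a::euclidean_space \<Rightarrow> 'a^'n)"
  by (rule linear_conv_bounded_linear[THEN iffD1], rule linearI) (simp_all add: axis_def vec_eq_iff)

lemma continuous_on_axis [continuous_intros]:
  "continuous_on S f \<Longrightarrow> continuous_on S (\<lambda>x. axis k (f x) :: 'a::euclidean_space^'n)"
  by (rule bounded_linear.continuous_on[OF bounded_linear_axis])

definition Phi :: "complex^5 \<Rightarrow> complex^8" where
  "Phi z = axis 1 (z$1) + axis 2 (z$3) + axis 3 (z$4) + axis 4 (z$5) + axis 5 (z$1 * z$2)
     + axis 6 (z$2 * (1 - z$3 + 2 * z$1 * z$2))"

definition Phi_deriv :: "complex^5 \<Rightarrow> complex^5 \<Rightarrow> complex^8" where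
  "Phi_deriv z v = axis 1 (v$1) + axis 2 (v$3) + axis 3 (v$4) + axis 4 (v$5)
     + axis 5 (v$1 * z$2 + z$1 * v$2)
     + axis 6 (v$2 * (1 - z$3 + 2 * z$1 * z$2) + z$2 * (2 * v$1 * z$2 + 2 * z$1 * v$2 - v$3))"

lemma Phi_nth:
  "Phi z $ 1 = z$1" "Phi z $ 2 = z$3" "Phi z $ 3 = z$4" "Phi z $ 4 = z$5"
  "Phi z $ 5 = z$1 * z$2" "Phi z $ 6 = z$2 * (1 - z$3 + 2 * z$1 * z$2)"
  by (simp_all add: Phi_def axis_def)

lemma Phi_has_derivative: "(Phi has_derivative Phi_deriv z) (at z)"
  unfolding Phi_def
  by (rule has_derivative_eq_rhs,
      (rule derivative_intros bounded_linear_imp_has_derivative[OF bounded_linear_vec_nth]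
        bounded_linear.has_derivative[OF bounded_linear_axis])+)
    (simp add: fun_eq_iff Phi_deriv_def algebra_simps)

lemma Phi_deriv_scale: "Phi_deriv z (c *s v) = c *s Phi_deriv z v"
  by (simp add: Phi_deriv_def axis_def vec_eq_iff algebra_simps)

lemma inj_Phi_deriv:
  assumes "z$3 \<noteq> 1"
  shows "inj (Phi_deriv z)"
proof -
  have "v = 0" if "Phi_deriv z v = 0" for v
  proof -
    have c: "Phi_deriv z v $ k = 0" for k using that by simp
    have v1345: "v$1 = 0" "v$3 = 0" "v$4 = 0" "v$5 = 0"
      using c[of 1] c[of 2] c[of 3] c[of 4] by (simp_all add: Phi_deriv_def axis_def)
    have "z$1 * v$2 = 0" and "v$2 * (1 - z$3 + 2 * z$1 * z$2) + 2 * z$1 * z$2 * v$2 = 0"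
      using c[of 5] c[of 6] v1345 by (simp_all add: Phi_deriv_def axis_def algebra_simps)
    then have "v$2 = 0" using assms by auto
    then show ?thesis using v1345 by (simp add: vec_eq_iff forall_5)
  qed
  moreover have "linear (Phi_deriv z)"
    using has_derivative_linear[OF Phi_has_derivative] .
  ultimately show ?thesis by (simp add: linear_inj_iff_eq_0)
qed

lemma inj_on_Phi: "inj_on Phi (cball 0 1)"
proof (rule inj_onI)
  fix x y :: "complex^5"
  assume x: "x \<in> cball 0 1" and y: "y \<in> cball 0 1" and eq: "Phi x = Phi y"
  have same: "x$1 = y$1" "x$3 = y$3" "x$4 = y$4" "x$5 = y$5" "x$1 * x$2 = y$1 * y$2"
    using eq by (metis Phi_nth)+
  have last: "x$2 * (1 - x$3 + 2 * x$1 * x$2) = y$2 * (1 - x$3 + 2 * x$1 * x$2)"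
    using eq same by (metis Phi_nth(6) mult.assoc)
  have "w$2 = 0" if "w \<in> cball 0 1" "w$3 = 1" for w :: "complex^5"
  proof -
    have "(norm w)\<^sup>2 \<le> 1" using that(1) by (simp add: power_le_one)
    moreover have "(norm (w$2))\<^sup>2 + 1 \<le> (norm w)\<^sup>2"
      using power2_norm_nth_add_le[of 2 3 w] that(2) by simp
    ultimately have "(norm (w$2))\<^sup>2 \<le> 0" by linarith
    then show ?thesis by simp
  qed
  then have "x$2 = y$2"
    using x y same last by (cases "x$1 = 0"; cases "x$3 = 1") auto
  then show "x = y"
    using same by (simp add: vec_eq_iff forall_5)
qed

lemma continuous_on_Phi: "continuous_on S Phi"
  using Phi_has_derivative by (metis continuous_at_imp_continuous_on has_derivative_continuous)

lemma holo_embedding_Phi: "holo_embedding (ball 0 1) Phi"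
  unfolding holo_embedding_def
proof (intro conjI ballI)
  show "holo_map_on (ball 0 1) Phi"
    unfolding holo_map_on_def using Phi_has_derivative Phi_deriv_scale by blast
  show "inj_on Phi (ball 0 1)"
    using inj_on_Phi by (rule inj_on_subset) auto
  show "inj (frechet_derivative Phi (at z))" if "z \<in> ball 0 1" for z
  proof -
    have "norm (z$3) < 1" using that Finite_Cartesian_Product.norm_nth_le[of z 3] by simp
    then have "inj (Phi_deriv z)"
      by (intro inj_Phi_deriv) auto
    then show ?thesis
      by (simp add: frechet_derivative_at[OF Phi_has_derivative, symmetric])
  qed
  obtain g where "homeomorphism (cball 0 1) (Phi ` cball 0 1) Phi g"
    using homeomorphism_compact[OF compact_cball continuous_on_Phi refl inj_on_Phi] by blast
  then show "\<exists>g. homeomorphism (ball 0 1) (Phi ` ball 0 1) Phi g"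
    using homeomorphism_of_subsets[OF _ ball_subset_cball image_mono[OF ball_subset_cball] refl] by blast
qed

lemma smooth_on_Phi: "smooth_on UNIV Phi"
  unfolding Phi_def
  by (intro smooth_on_add smooth_on_diff smooth_on_compose_linear[OF bounded_linear_axis]
      smooth_on_bilinear[OF bounded_bilinear_mult] smooth_on_const open_UNIV
      smooth_on_linear[OF open_UNIV bounded_linear_vec_nth])

definition circle_lift :: "real \<Rightarrow> complex \<Rightarrow> complex^5" where
  "circle_lift r \<zeta> = axis 1 (of_real r * \<zeta>) + axis 2 (- of_real r * cnj \<zeta>) + axis 3 (of_real (1 - 2 * r\<^sup>2))"

definition Phi_disc :: "real \<Rightarrow> complex \<Rightarrow> complex^8" where
  "Phi_disc r \<zeta> = axis 1 (of_real r * \<zeta>) + axis 2 (of_real (1 - 2 * r\<^sup>2)) + axis 5 (of_real (- r\<^sup>2))"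

lemma circle_lift_in_cball:
  assumes "r\<^sup>2 \<le> 1/2" and "norm \<zeta> = 1"
  shows "circle_lift r \<zeta> \<in> cball 0 1"
proof -
  have "(norm (circle_lift r \<zeta>))\<^sup>2 = (\<Sum>i\<in>{1, 2, 3, 4, 5::5}. (norm (circle_lift r \<zeta> $ i))\<^sup>2)"
    by (simp only: power2_norm_vec UNIV_5)
  also have "\<dots> = (norm (of_real r * \<zeta>))\<^sup>2 + (norm (- of_real r * cnj \<zeta>))\<^sup>2
      + (norm (of_real (1 - 2 * r\<^sup>2) :: complex))\<^sup>2"
    by (simp add: circle_lift_def axis_def)
  also have "\<dots> = r\<^sup>2 + r\<^sup>2 + (1 - 2 * r\<^sup>2)\<^sup>2"
    using assms(2) by (simp only: norm_mult norm_minus_cancel norm_of_real complex_mod_cnj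
        power2_abs mult_1_right)
  also have "\<dots> = 1 - 2 * r\<^sup>2 * (1 - 2 * r\<^sup>2)"
    by (simp add: power2_eq_square algebra_simps)
  also have "\<dots> \<le> 1"
    using assms(1) by (simp add: zero_le_mult_iff)
  finally show ?thesis by (simp add: power_le_one_iff)
qed

lemma Phi_circle_lift:
  assumes "norm \<zeta> = 1"
  shows "Phi (circle_lift r \<zeta>) = Phi_disc r \<zeta>"
proof -
  define z where "z = circle_lift r \<zeta>"
  have z: "z$1 = of_real r * \<zeta>" "z$2 = - of_real r * cnj \<zeta>" "z$3 = of_real (1 - 2 * r\<^sup>2)"
    "z$4 = 0" "z$5 = 0"
    by (simp_all add: z_def circle_lift_def axis_def)
  have "z$1 * z$2 = - (of_real r)\<^sup>2 * (\<zeta> * cnj \<zeta>)"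
    by (simp add: z power2_eq_square algebra_simps)
  also have "\<zeta> * cnj \<zeta> = 1"
    using assms complex_norm_square[of \<zeta>] by simp
  finally have prod: "z$1 * z$2 = of_real (- r\<^sup>2)"
    by simp
  have factor: "1 - z$3 + 2 * z$1 * z$2 = 0"
    using prod by (simp add: z(3) mult.assoc)
  show ?thesis
    unfolding z_def[symmetric] Phi_def factor prod
    by (simp add: z Phi_disc_def axis_def vec_eq_iff)
qed

lemma analytic_disc_Phi_disc: "analytic_disc (Phi_disc r)"
proof -
  have "(Phi_disc r has_derivative (\<lambda>h. h *s axis 1 (of_real r))) (at z)" for z
    unfolding Phi_disc_def
    by (rule has_derivative_eq_rhs,
        (rule derivative_intros bounded_linear.has_derivative[OF bounded_linear_axis])+)
      (simp add: fun_eq_iff vec_eq_iff axis_def)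
  then show ?thesis
    unfolding analytic_disc_def
    by (metis continuous_at_imp_continuous_on has_derivative_continuous)
qed

lemma continuous_on_Phi_disc: "continuous_on S (\<lambda>(r, \<zeta>). Phi_disc r \<zeta>)"
  unfolding Phi_disc_def case_prod_beta by (intro continuous_intros)

lemma Phi_disc_center_notin_range:
  assumes "r \<noteq> 0"
  shows "Phi_disc r 0 \<notin> range Phi"
proof
  assume "Phi_disc r 0 \<in> range Phi"
  then obtain z where "Phi_disc r 0 = Phi z" by blast
  then have "Phi_disc r 0 $ 1 = Phi z $ 1" and "Phi_disc r 0 $ 5 = Phi z $ 5" by simp_all
  then have "z$1 = 0" and "z$1 * z$2 = of_real (- r\<^sup>2)"
    by (simp_all add: Phi_nth Phi_disc_def axis_def)
  then show False using assms by simp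
qed

lemma Phi_disc_sphere_subset:
  assumes "r\<^sup>2 \<le> 1/2"
  shows "Phi_disc r ` sphere 0 1 \<subseteq> Phi ` cball 0 1"
  using Phi_circle_lift circle_lift_in_cball[OF assms] by (metis image_subsetI image_eqI mem_sphere_0)

theorem mainTheorem10:
  shows "\<exists>\<Phi> :: complex^5 \<Rightarrow> complex^8.
           smooth_on_set (cball 0 1) \<Phi> \<and>
           inj_on \<Phi> (cball 0 1) \<and>
           holo_embedding (ball 0 1) \<Phi> \<and>
           \<not> has_stein_nbhd_basis (\<Phi> ` cball 0 1)"
proof (intro exI conjI)
  show "smooth_on_set (cball 0 1) Phi"
    unfolding smooth_on_set_def using smooth_on_Phi by blast
  show "inj_on Phi (cball 0 1)" by (rule inj_on_Phi)
  show "holo_embedding (ball 0 1) Phi" by (rule holo_embedding_Phi)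
  have "r\<^sup>2 \<le> 1/2" if "r \<in> {0..1/2}" for r :: real
    using that power_mono[of r "1/2" 2] by (simp add: power2_eq_square)
  then have bdry: "Phi_disc r ` sphere 0 1 \<subseteq> Phi ` cball 0 1" if "r \<in> {0..1/2}" for r
    using that by (intro Phi_disc_sphere_subset)
  have "Phi_disc 0 ` cball 0 1 = Phi_disc 0 ` sphere 0 1"
    by (force simp: Phi_disc_def intro: image_eqI[of _ _ 1])
  then have start: "Phi_disc 0 ` cball 0 1 \<subseteq> Phi ` cball 0 1"
    using bdry[of 0] by simp
  show "\<not> has_stein_nbhd_basis (Phi ` cball 0 1)"
    using Phi_disc_center_notin_range[of "1/2"]
    by (intro not_has_stein_nbhd_basis_by_discs[where D = Phi_disc and a = 0 and b = "1/2"
          and t = "1/2" and z = 0] compact_continuous_image continuous_on_Phi compact_cball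
          continuous_on_Phi_disc analytic_disc_Phi_disc bdry start) auto
qed

end
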